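(* Consider the rendezvous game on a connected graph $G$ against Divider with exactly one agent $D_1$. Suppose that at some moment when it is Facilitator's turn to move, $R$ and $J$ occupy vertices of a cycle $C$ of $G$ that has no shortcut, and $D_1$ also occupies a vertex of $C$. Then Facilitator has a winning strategy in which $R$ and $J$ meet within at most $\ell(C)/2$ further moves of Facilitator.
   Context: Rendezvous game with adversaries. Let $G$ be a finite, simple, undirected, connected graph, let $s,t\in V(G)$ and let $k\ge 1$ be an integer. Two players play: Facilitator, who controls two agents $R$ and $J$ initially placed on $s$ and $t$ respectively, and Divider, who controls $k$ agents $D_1,\dots,D_k$ which Divider initially places on vertices of $V(G)\setminus\{s,t\}$ of his choice (several agents may share a vertex). After the initial placement the players alternate moves, Facilitator moving first. In a move, the player moves each of his agents to an adjacent vertex or leaves it where it is; no agent may be moved to a vertex currently occupied by an agent of the opponent. Both players have full information. Facilitator wins if at some moment $R$ and $J$ occupy the same vertex; Divider wins if this never happens. $\ell(P)$, $\ell(C)$ denote the number of edges of a path $P$ or cycle $C$. For a cycle $C$ of $G$ and distinct $u,v\in V(C)$, let $P_1,P_2$ be the two internally vertex-disjoint $(u,v)$-paths contained in $C$. $C$ has a $(u,v)$-shortcut if there is a $(u,v)$-path $P$ in $G-(V(C)\setminus\{u,v\})$ with $\ell(P)<\ell(P_1)$ and $\ell(P)<\ell(P_2)$; $C$ has a shortcut if it has a $(u,v)$-shortcut for some distinct $u,v\in V(C)$. *)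

theory Defs
  imports Main
begin

definition simple_graph :: "'a set \<Rightarrow> ('a \<Rightarrow> 'a \<Rightarrow> bool) \<Rightarrow> bool" where
  "simple_graph V E \<longleftrightarrow> finite V \<and>
     (\<forall>x y. E x y \<longrightarrow> x \<in> V \<and> y \<in> V \<and> x \<noteq> y \<and> E y x)"

definition connected_graph :: "'a set \<Rightarrow> ('a \<Rightarrow> 'a \<Rightarrow> bool) \<Rightarrow> bool" where
  "connected_graph V E \<longleftrightarrow> V \<noteq> {} \<and> (\<forall>x\<in>V. \<forall>y\<in>V. E\<^sup>*\<^sup>* x y)"

text \<open>A cycle is given by the cyclic list of its distinct vertices c_0, ..., c_(n-1), n >= 3;
  its length (number of edges) is n.\<close>
definition is_cycle :: "'a set \<Rightarrow> ('a \<Rightarrow> 'a \<Rightarrow> bool) \<Rightarrow> 'a list \<Rightarrow> bool" where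
  "is_cycle V E cs \<longleftrightarrow> length cs \<ge> 3 \<and> distinct cs \<and> set cs \<subseteq> V \<and>
     (\<forall>i < length cs. E (cs ! i) (cs ! ((i + 1) mod length cs)))"

text \<open>A (u,v)-path given as its list of distinct vertices; its length is (number of vertices - 1).\<close>
definition is_path :: "('a \<Rightarrow> 'a \<Rightarrow> bool) \<Rightarrow> 'a list \<Rightarrow> 'a \<Rightarrow> 'a \<Rightarrow> bool" where
  "is_path E ps u v \<longleftrightarrow> ps \<noteq> [] \<and> hd ps = u \<and> last ps = v \<and> distinct ps \<and>
     (\<forall>i. i + 1 < length ps \<longrightarrow> E (ps ! i) (ps ! (i + 1)))"

text \<open>Shortcut: for distinct u = c_i, v = c_k (i < k) the two arcs of C have lengths k - i and
  n - (k - i); a shortcut is a (u,v)-path avoiding V(C) - {u,v} strictly shorter than both.\<close>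
definition has_shortcut :: "'a set \<Rightarrow> ('a \<Rightarrow> 'a \<Rightarrow> bool) \<Rightarrow> 'a list \<Rightarrow> bool" where
  "has_shortcut V E cs \<longleftrightarrow>
     (\<exists>i k ps. i < k \<and> k < length cs \<and> is_path E ps (cs ! i) (cs ! k) \<and> set ps \<subseteq> V \<and>
        set ps \<inter> set cs \<subseteq> {cs ! i, cs ! k} \<and>
        length ps - 1 < k - i \<and> length ps - 1 < length cs - (k - i))"

definition step :: "('a \<Rightarrow> 'a \<Rightarrow> bool) \<Rightarrow> 'a \<Rightarrow> 'a \<Rightarrow> bool" where
  "step E x y \<longleftrightarrow> x = y \<or> E x y"

text \<open>Game with one Divider agent. fwin E n r j d: in the position where R is at r, J at j,
  D_1 at d and Facilitator is to move, Facilitator can force R and J to meet within at most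
  n further Facilitator moves.\<close>
fun fwin :: "('a \<Rightarrow> 'a \<Rightarrow> bool) \<Rightarrow> nat \<Rightarrow> 'a \<Rightarrow> 'a \<Rightarrow> 'a \<Rightarrow> bool" where
  "fwin E 0 r j d = (r = j)"
| "fwin E (Suc n) r j d =
     (r = j \<or> (\<exists>r' j'. step E r r' \<and> step E j j' \<and> r' \<noteq> d \<and> j' \<noteq> d \<and>
        (r' = j' \<or> (\<forall>d'. step E d d' \<and> d' \<noteq> r' \<and> d' \<noteq> j' \<longrightarrow> fwin E n r' j' d'))))"

end

theory Submission
  imports Defs
begin

text \<open>R and J walk towards each other along the arc of C between them that avoids D, each
  shrinking the arc by one edge per move, so they meet after at most half of its length.
  What must be maintained is that D never blocks them.  The invariant is: D lies off C or
  on the complementary open arc, and every path from D to an inner vertex at distance k from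
  the ends of the arc of length g, meeting C only at its ends, has more than min k (g - k)
  edges.  Initially this is exactly the absence of a shortcut; after a round the arc has
  lost one vertex at each end while such paths from D have become at most one edge shorter.\<close>

lemma mod_add_cases:
  fixes s D n :: nat
  assumes "0 < D" "D < n"
  shows "(s + D) mod n = s mod n + D \<or> (s + D) mod n + n = s mod n + D"
proof -
  have mod_eq: "(s + D) mod n = (s mod n + D) mod n" by (simp add: mod_add_left_eq)
  have lt: "s mod n < n" using assms by simp
  show ?thesis
  proof (cases "s mod n + D < n")
    case True
    then show ?thesis using mod_eq by simp
  next
    case False
    then have "(s mod n + D) mod n = (s mod n + D - n) mod n" by (simp add: le_mod_geq)
    also have "\<dots> = s mod n + D - n" using lt assms by (intro mod_less) linarith
    finally show ?thesis using mod_eq False by simp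
  qed
qed

lemma mod_add_left_inj:
  fixes a p q n :: nat
  assumes "(a + p) mod n = (a + q) mod n" "p < n" "q < n"
  shows "p = q"
proof -
  have "p = q" if "p \<le> q" "(a + q) mod n = (a + p) mod n" "q < n" for p q
  proof -
    have "n dvd q - p" using that mod_eq_dvd_iff_nat by simp
    moreover have "q - p < n" using that by simp
    ultimately show ?thesis using that dvd_imp_le by fastforce
  qed
  then show ?thesis using assms by (metis nat_le_linear)
qed

lemma is_path_rev:
  assumes sym: "\<And>x y. E x y \<Longrightarrow> E y x" and p: "is_path E ps u v"
  shows "is_path E (rev ps) v u"
proof -
  have "E (rev ps ! i) (rev ps ! (i + 1))" if i: "i + 1 < length ps" for i
  proof -
    let ?i' = "length ps - 1 - (i + 1)"
    have "E (ps ! ?i') (ps ! (?i' + 1))" using p i by (simp add: is_path_def)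
    moreover have "?i' + 1 = length ps - 1 - i" using i by simp
    ultimately show ?thesis using i sym by (simp add: rev_nth)
  qed
  then show ?thesis using p by (simp add: is_path_def hd_rev last_rev)
qed

lemma is_path_drop:
  assumes "is_path E ps u v" "i < length ps"
  shows "is_path E (drop i ps) (ps ! i) v"
  using assms unfolding is_path_def by (auto simp: hd_drop_conv_nth last_drop)

lemma is_path_Cons:
  assumes p: "is_path E ps u v" and "E w u" and "w \<notin> set ps"
  shows "is_path E (w # ps) w v"
proof -
  have "E ((w # ps) ! i) ((w # ps) ! (i + 1))" if "i + 1 < length (w # ps)" for i
    using p that assms(2) by (cases i) (auto simp: is_path_def hd_conv_nth)
  then show ?thesis using assms by (auto simp: is_path_def)
qed

lemma is_path_subset_vertices:
  assumes G: "simple_graph V E" and p: "is_path E ps u v" and "u \<noteq> v"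
  shows "set ps \<subseteq> V"
proof
  fix y assume "y \<in> set ps"
  then obtain i where i: "i < length ps" "y = ps ! i" by (metis in_set_conv_nth)
  have edge: "\<And>i. i + 1 < length ps \<Longrightarrow> E (ps ! i) (ps ! (i + 1))"
    using p by (simp add: is_path_def)
  have "length ps \<noteq> 0" "length ps \<noteq> 1"
    using p \<open>u \<noteq> v\<close> by (auto simp: is_path_def length_Suc_conv)
  then have "2 \<le> length ps" by linarith
  then consider "i + 1 < length ps" | "i = (i - 1) + 1" "i - 1 + 1 < length ps"
    using i by linarith
  then show "y \<in> V"
    using edge i G unfolding simple_graph_def by cases metis+
qed

lemma fwin_same: "fwin E m r r d"
  by (cases m) auto

lemma fwin_swap: "fwin E m r j d \<Longrightarrow> fwin E m j r d"
proof (induction m arbitrary: r j d)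
  case 0
  then show ?case by simp
next
  case (Suc m)
  then show ?case by auto metis+
qed

locale shortcut_free_cycle =
  fixes V :: "'a set" and E :: "'a \<Rightarrow> 'a \<Rightarrow> bool" and cs :: "'a list"
  assumes simple: "simple_graph V E"
    and cycle: "is_cycle V E cs"
    and no_shortcut: "\<not> has_shortcut V E cs"
begin

definition vertex :: "nat \<Rightarrow> 'a" where
  "vertex i = cs ! (i mod length cs)"

definition off_cycle_path :: "'a list \<Rightarrow> 'a \<Rightarrow> 'a \<Rightarrow> bool" where
  "off_cycle_path Q u v \<longleftrightarrow> is_path E Q u v \<and> set Q \<inter> set cs \<subseteq> {u, v}"

lemma length_pos: "0 < length cs"
  using cycle by (auto simp: is_cycle_def)

lemma edge_sym: "E x y \<Longrightarrow> E y x"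
  using simple by (simp add: simple_graph_def)

lemma vertex_in_cycle: "vertex i \<in> set cs"
  using length_pos by (simp add: vertex_def)

lemma edge_vertex_Suc: "E (vertex i) (vertex (Suc i))"
proof -
  have "E (cs ! (i mod length cs)) (cs ! ((i mod length cs + 1) mod length cs))"
    using cycle length_pos by (simp add: is_cycle_def)
  then show ?thesis by (simp add: vertex_def mod_Suc_eq)
qed

lemma step_vertex_Suc: "step E (vertex i) (vertex (Suc i))" "step E (vertex (Suc i)) (vertex i)"
  using edge_vertex_Suc edge_sym by (auto simp: step_def)

lemma vertex_add_inj:
  assumes "p < length cs" "q < length cs" "vertex (a + p) = vertex (a + q)"
  shows "p = q"
proof -
  have "distinct cs" using cycle by (simp add: is_cycle_def)
  then have "(a + p) mod length cs = (a + q) mod length cs"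
    using assms(3) length_pos by (simp add: vertex_def nth_eq_iff_index_eq)
  then show ?thesis using assms(1,2) by (rule mod_add_left_inj)
qed

lemma vertex_add_surj:
  assumes "v \<in> set cs"
  obtains m where "m < length cs" "v = vertex (a + m)"
proof -
  let ?n = "length cs"
  obtain i where i: "i < ?n" "v = cs ! i" using assms by (metis in_set_conv_nth)
  define m where "m = (i + ?n - a mod ?n) mod ?n"
  have "(a + m) mod ?n = (a mod ?n + (i + ?n - a mod ?n)) mod ?n"
    unfolding m_def by (simp add: mod_add_left_eq mod_add_right_eq)
  also have "a mod ?n + (i + ?n - a mod ?n) = i + ?n"
    using length_pos by (simp add: trans_le_add2)
  finally have "v = vertex (a + m)" using i by (simp add: vertex_def)
  moreover have "m < ?n" using length_pos by (simp add: m_def)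
  ultimately show ?thesis using that by blast
qed

lemma off_cycle_path_rev: "off_cycle_path Q u v \<Longrightarrow> off_cycle_path (rev Q) v u"
  using is_path_rev[OF edge_sym] by (auto simp: off_cycle_path_def)

lemma off_cycle_path_nth_length:
  assumes "i < k" "k < length cs" and Q: "off_cycle_path Q (cs ! i) (cs ! k)"
  shows "min (k - i) (length cs - (k - i)) \<le> length Q - 1"
proof -
  have "cs ! i \<noteq> cs ! k"
    using cycle assms(1,2) by (simp add: is_cycle_def nth_eq_iff_index_eq)
  then have "set Q \<subseteq> V"
    using Q is_path_subset_vertices[OF simple] by (auto simp: off_cycle_path_def)
  then have "\<not> (length Q - 1 < k - i \<and> length Q - 1 < length cs - (k - i))"
    using no_shortcut assms unfolding has_shortcut_def off_cycle_path_def by blast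
  then show ?thesis by (auto simp: min_def)
qed

lemma off_cycle_path_length:
  assumes D: "0 < D" "D < length cs" and Q: "off_cycle_path Q (vertex p) (vertex (p + D))"
  shows "min D (length cs - D) \<le> length Q - 1"
proof -
  let ?n = "length cs"
  define i where "i = p mod ?n"
  define k where "k = (p + D) mod ?n"
  have ik: "i < ?n" "k < ?n" using length_pos by (auto simp: i_def k_def)
  have shift: "k = i + D \<or> k + ?n = i + D"
    using mod_add_cases[OF D] by (simp add: i_def k_def)
  have Q': "off_cycle_path Q (cs ! i) (cs ! k)" using Q by (simp add: vertex_def i_def k_def)
  have "i \<noteq> k" using shift D by auto
  then consider "i < k" | "k < i" by linarith
  then show ?thesis
  proof cases
    case 1
    then show ?thesis using off_cycle_path_nth_length[OF 1 ik(2) Q'] shift D by auto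
  next
    case 2
    have "off_cycle_path (rev Q) (cs ! k) (cs ! i)" using Q' by (rule off_cycle_path_rev)
    then have "min (i - k) (?n - (i - k)) \<le> length (rev Q) - 1"
      by (rule off_cycle_path_nth_length[OF 2 ik(1)])
    then show ?thesis using 2 shift D by auto
  qed
qed

lemma off_cycle_path_to_arc_length:
  assumes d: "d = vertex (a + g + e)" and e: "1 \<le> e" "g + e < length cs"
    and k: "0 < k" "k \<le> g" and Q: "off_cycle_path Q d (vertex (a + k))"
  shows "min k (g - k) < length Q - 1"
proof -
  have shift: "a + k + (g + e - k) = a + g + e" using k by simp
  have "off_cycle_path (rev Q) (vertex (a + k)) (vertex (a + k + (g + e - k)))"
    unfolding shift using off_cycle_path_rev[OF Q] d by simp
  then have "min (g + e - k) (length cs - (g + e - k)) \<le> length (rev Q) - 1"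
    using off_cycle_path_length[of "g + e - k" "rev Q" "a + k"] e k by simp
  then show ?thesis using e k by auto
qed

lemma off_cycle_path_from_neighbour:
  assumes Q: "off_cycle_path Q d' x" and "d' \<notin> set cs" and "step E d d'"
  obtains Q' where "off_cycle_path Q' d x" "length Q' \<le> length Q + 1"
proof (cases "d \<in> set Q")
  case True
  then obtain i where i: "i < length Q" "Q ! i = d" by (metis in_set_conv_nth)
  have "is_path E (drop i Q) d x"
    using Q is_path_drop[OF _ i(1)] i(2) by (auto simp: off_cycle_path_def)
  moreover have "set (drop i Q) \<inter> set cs \<subseteq> {d, x}"
    using Q \<open>d' \<notin> set cs\<close> set_drop_subset by (fastforce simp: off_cycle_path_def)
  ultimately show ?thesis using that by (auto simp: off_cycle_path_def)
next
  case False
  have "hd Q = d'" "Q \<noteq> []" using Q by (auto simp: off_cycle_path_def is_path_def)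
  then have "E d d'" using False \<open>step E d d'\<close> by (auto simp: step_def)
  then have "is_path E (d # Q) d x"
    using Q False is_path_Cons by (auto simp: off_cycle_path_def)
  moreover have "set (d # Q) \<inter> set cs \<subseteq> {d, x}"
    using Q \<open>d' \<notin> set cs\<close> by (auto simp: off_cycle_path_def)
  ultimately show ?thesis using that[of "d # Q"] by (auto simp: off_cycle_path_def)
qed

text \<open>R stands on vertex a and J on vertex (a + g).\<close>

definition arc_guarded :: "nat \<Rightarrow> nat \<Rightarrow> 'a \<Rightarrow> bool" where
  "arc_guarded a g d \<longleftrightarrow> g + 1 < length cs \<and>
     (d \<in> set cs \<longrightarrow> (\<exists>e. 1 \<le> e \<and> g + e < length cs \<and> d = vertex (a + g + e))) \<and>
     (\<forall>k Q. 0 < k \<longrightarrow> k < g \<longrightarrow> off_cycle_path Q d (vertex (a + k)) \<longrightarrow>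
        min k (g - k) < length Q - 1)"

lemma arc_guarded_init:
  assumes "d = vertex (a + g + e)" "1 \<le> e" "g + e < length cs"
  shows "arc_guarded a g d"
  using assms off_cycle_path_to_arc_length[OF assms] unfolding arc_guarded_def by auto

lemma arc_guarded_not_on_arc:
  assumes "arc_guarded a g d" "k \<le> g"
  shows "vertex (a + k) \<noteq> d"
proof
  assume on_arc: "vertex (a + k) = d"
  then obtain e where e: "1 \<le> e" "g + e < length cs" "d = vertex (a + (g + e))"
    using assms(1) vertex_in_cycle unfolding arc_guarded_def add.assoc by metis
  then have "k = g + e" using on_arc assms(2) vertex_add_inj by simp
  then show False using e assms(2) by simp
qed

lemma arc_guarded_step_on_cycle:
  assumes guarded: "arc_guarded a g d" and "3 \<le> g" and "step E d d'" and "d' \<in> set cs"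
  shows "\<exists>e. 1 \<le> e \<and> g - 2 + e < length cs \<and> d' = vertex (Suc a + (g - 2) + e)"
proof (cases "d' = d")
  case True
  then obtain e where e: "1 \<le> e" "g + e < length cs" "d' = vertex (a + g + e)"
    using guarded \<open>d' \<in> set cs\<close> by (auto simp: arc_guarded_def)
  moreover have "Suc a + (g - 2) + (e + 1) = a + g + e" using \<open>3 \<le> g\<close> by simp
  ultimately show ?thesis using \<open>3 \<le> g\<close> by (intro exI[of _ "e + 1"]) auto
next
  case False
  then have "E d d'" using \<open>step E d d'\<close> by (simp add: step_def)
  obtain m where m: "m < length cs" "d' = vertex (a + m)"
    using vertex_add_surj[OF \<open>d' \<in> set cs\<close>] by blast
  have "\<not> (0 < m \<and> m < g)"
  proof
    assume inner: "0 < m \<and> m < g"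
    moreover have "off_cycle_path [d, d'] d (vertex (a + m))"
      using \<open>E d d'\<close> False m by (auto simp: off_cycle_path_def is_path_def)
    ultimately have "min m (g - m) < length [d, d'] - 1"
      using guarded unfolding arc_guarded_def by blast
    then show False using inner by (simp add: min_def split: if_splits)
  qed
  then consider "m = 0" | "g \<le> m" by linarith
  then show ?thesis
  proof cases
    case 1
    have "g + 1 < length cs" using guarded by (simp add: arc_guarded_def)
    then have shift: "Suc a + (g - 2) + (length cs - g + 1) = a + length cs"
      using \<open>3 \<le> g\<close> by simp
    have "vertex (a + length cs) = d'" using 1 m(2) by (simp add: vertex_def)
    then have "d' = vertex (Suc a + (g - 2) + (length cs - g + 1))" unfolding shift by simp
    then show ?thesis using m \<open>3 \<le> g\<close> \<open>g + 1 < length cs\<close>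
      by (intro exI[of _ "length cs - g + 1"]) auto
  next
    case 2
    then have "Suc a + (g - 2) + (m - g + 1) = a + m" using \<open>3 \<le> g\<close> by simp
    then show ?thesis using m \<open>3 \<le> g\<close> 2 by (intro exI[of _ "m - g + 1"]) auto
  qed
qed

lemma arc_guarded_step:
  assumes guarded: "arc_guarded a g d" and "3 \<le> g" and "step E d d'"
  shows "arc_guarded (Suc a) (g - 2) d'"
proof -
  have "g + 1 < length cs" using guarded by (simp add: arc_guarded_def)
  moreover have position: "d' \<in> set cs \<Longrightarrow>
      \<exists>e. 1 \<le> e \<and> g - 2 + e < length cs \<and> d' = vertex (Suc a + (g - 2) + e)"
    using arc_guarded_step_on_cycle[OF assms] .
  moreover have "min k (g - 2 - k) < length Q - 1"
    if k: "0 < k" "k < g - 2" and Q: "off_cycle_path Q d' (vertex (Suc a + k))" for k Q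
  proof (cases "d' \<in> set cs")
    case True
    then obtain e where "d' = vertex (Suc a + (g - 2) + e)" "1 \<le> e" "g - 2 + e < length cs"
      using position by blast
    then show ?thesis using off_cycle_path_to_arc_length[of d' "Suc a" "g - 2" e k Q] k Q by simp
  next
    case False
    obtain Q' where Q': "off_cycle_path Q' d (vertex (Suc a + k))" "length Q' \<le> length Q + 1"
      using off_cycle_path_from_neighbour[OF Q False \<open>step E d d'\<close>] .
    have "Suc a + k = a + (k + 1)" by simp
    then have "min (k + 1) (g - (k + 1)) < length Q' - 1"
      using guarded Q'(1) k unfolding arc_guarded_def by auto
    moreover have "Q \<noteq> []" using Q by (simp add: off_cycle_path_def is_path_def)
    ultimately show ?thesis using Q'(2) k by (auto simp: min_def split: if_splits)
  qed
  ultimately show ?thesis unfolding arc_guarded_def by auto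
qed

text \<open>R advances from vertex a and J retreats from vertex (a + g); neither can be blocked
  since D stays off the arc.\<close>

lemma fwin_arc:
  "arc_guarded a g d \<Longrightarrow> (g + 1) div 2 \<le> m \<Longrightarrow> fwin E m (vertex a) (vertex (a + g)) d"
proof (induction g arbitrary: a d m rule: less_induct)
  case (less g)
  note guarded = less.prems(1)
  consider "g = 0" | "g = 1" | "g = 2" | "3 \<le> g" by linarith
  then show ?case
  proof cases
    case 1
    then show ?thesis by (simp add: fwin_same)
  next
    case 2
    then obtain m' where "m = Suc m'" using less.prems(2) by (cases m) auto
    moreover have "vertex (a + 1) \<noteq> d" using arc_guarded_not_on_arc[OF guarded, of 1] 2 by simp
    ultimately show ?thesis using 2 step_vertex_Suc(1)[of a] by (auto simp: step_def)
  next
    case 3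
    then obtain m' where "m = Suc m'" using less.prems(2) by (cases m) auto
    moreover have "vertex (Suc a) \<noteq> d" using arc_guarded_not_on_arc[OF guarded, of 1] 3 by simp
    moreover have "vertex (a + g) = vertex (Suc (Suc a))" using 3 by simp
    ultimately show ?thesis using step_vertex_Suc(1)[of a] step_vertex_Suc(2)[of "Suc a"]
      by (auto simp: step_def)
  next
    case 4
    then obtain m' where m: "m = Suc m'" "(g - 2 + 1) div 2 \<le> m'"
      using less.prems(2) by (cases m) auto
    let ?r = "vertex (Suc a)" and ?j = "vertex (Suc a + (g - 2))"
    have j_next: "Suc (Suc a + (g - 2)) = a + g" and j_pos: "Suc a + (g - 2) = a + (g - 1)"
      using 4 by simp_all
    have "step E (vertex (a + g)) ?j" using step_vertex_Suc(2)[of "Suc a + (g - 2)"] j_next by metis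
    moreover have "step E (vertex a) ?r" by (rule step_vertex_Suc(1))
    moreover have "?r \<noteq> d" using arc_guarded_not_on_arc[OF guarded, of 1] 4 by simp
    moreover have "?j \<noteq> d" using arc_guarded_not_on_arc[OF guarded, of "g - 1"] j_pos diff_le_self
      by metis
    moreover have "fwin E m' ?r ?j d'" if "step E d d'" for d'
    proof -
      have "g - 2 < g" using 4 by simp
      then show ?thesis using less.IH arc_guarded_step[OF guarded 4 that] m(2) by blast
    qed
    ultimately show ?thesis using m by auto
  qed
qed

lemma fwin_on_cycle:
  assumes "r \<in> set cs" "j \<in> set cs" "d \<in> set cs" "d \<noteq> r" "d \<noteq> j"
  shows "fwin E (length cs div 2) r j d"
proof -
  let ?n = "length cs"
  have fwin_ordered: "fwin E (?n div 2) (vertex a) (vertex (a + g)) (vertex (a + g + e))"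
    if "1 \<le> e" "g + e < ?n" for a g e
    using fwin_arc[OF arc_guarded_init[OF refl that]] that by simp
  obtain a where a: "r = vertex a" using vertex_add_surj[OF assms(1), of 0] by auto
  obtain g where g: "g < ?n" "j = vertex (a + g)" using vertex_add_surj[OF assms(2)] by metis
  obtain f where f: "f < ?n" "d = vertex (a + f)" using vertex_add_surj[OF assms(3)] by metis
  have "f \<noteq> 0" using a f(2) assms(4) by (metis add_0_right)
  have "f \<noteq> g" using g f assms(5) by auto
  consider "g < f" | "f < g" using \<open>f \<noteq> g\<close> by linarith
  then show ?thesis
  proof cases
    case 1
    then show ?thesis using fwin_ordered[of "f - g" g a] a g f by simp
  next
    case 2
    text \<open>Seen from J, the order along C is J, R, D.\<close>
    have "r = vertex (a + g + (?n - g))" using a g(1) by (simp add: vertex_def)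
    moreover have "d = vertex (a + g + (?n - g) + f)"
    proof -
      have "a + g + (?n - g) + f = (a + f) + ?n" using g(1) by simp
      then show ?thesis using f(2) by (simp only: vertex_def mod_add_self2)
    qed
    ultimately have "fwin E (?n div 2) j r d"
      using fwin_ordered[of f "?n - g" "a + g"] g 2 \<open>f \<noteq> 0\<close> by simp
    then show ?thesis by (rule fwin_swap)
  qed
qed

end

theorem claim2:
  fixes V :: "'a set" and E :: "'a \<Rightarrow> 'a \<Rightarrow> bool" and cs :: "'a list" and r j d :: 'a
  assumes "simple_graph V E"
    and "connected_graph V E"
    and "is_cycle V E cs"
    and "\<not> has_shortcut V E cs"
    and "r \<in> set cs" and "j \<in> set cs" and "d \<in> set cs"
    and "d \<noteq> r" and "d \<noteq> j"
  shows "fwin E (length cs div 2) r j d"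
proof -
  interpret shortcut_free_cycle V E cs
    using assms(1,3,4) by unfold_locales
  show ?thesis using assms(5-9) by (rule fwin_on_cycle)
qed

end
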